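(* Let $A \in \mathbb{R}^{m \times n}$ and $b \in \mathbb{R}^m$, and suppose that $\mathcal{P} = \{x \in \mathbb{R}^n : Ax \geq b\}$ is a polytope (i.e., bounded) and that we are in the nondegenerate setting (distinct feasible bases have distinct basic points). Let $G = (V,E)$ be a finite undirected graph whose vertices are subsets of $[m]$. Suppose that all of the following hold: (i) $G$ is nonempty; (ii) every $I \in V$ is a feasible basis; (iii) for every $I \in V$ and every $J \in N_G(I)$, $\#(I \cap J) = n-1$; (iv) for every $I \in V$, $\# N_G(I) = n$. Then $G = G_\mathrm{bases}$.
   Context: $[m] = \{1,\dots,m\}$. For $I \subset [m]$, $A_I$ and $b_I$ denote the submatrix of $A$ (resp. subvector of $b$) formed by the rows indexed by $I$. A basis is a subset $I \subset [m]$ with $\#I = n$ such that $A_I$ is nonsingular; its basic point is the unique solution $x^I$ of $A_I x = b_I$. The basis is feasible if $x^I \in \mathcal{P}$. Two feasible bases $I, I'$ are adjacent if $\#(I \cap I') = n-1$. $G_\mathrm{bases}$ is the graph whose vertices are the feasible bases of $\mathcal{P}$ and whose edges join adjacent feasible bases. $N_G(I)$ is the set of neighbors of $I$ in $G$. The nondegenerate setting means that the map $I \mapsto x^I$ from feasible bases to points is injective. *)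

theory Defs
  imports "Jordan_Normal_Form.Determinant" "Jordan_Normal_Form.DL_Submatrix"
begin

text \<open>Rows of A are indexed by 0..<m (the paper's [m] = 1..m, shifted by one).
  A is an m x n real matrix, b a vector of dimension m.\<close>

definition polyhedron :: "real mat \<Rightarrow> real vec \<Rightarrow> real vec set" where
  "polyhedron A b = {x \<in> carrier_vec (dim_col A). \<forall>i < dim_row A. row A i \<bullet> x \<ge> b $ i}"

definition is_polytope :: "real mat \<Rightarrow> real vec \<Rightarrow> bool" where
  "is_polytope A b \<longleftrightarrow> (\<exists>M. \<forall>x \<in> polyhedron A b. \<forall>j < dim_col A. \<bar>x $ j\<bar> \<le> M)"

definition is_basis :: "real mat \<Rightarrow> nat set \<Rightarrow> bool" where
  "is_basis A I \<longleftrightarrow> I \<subseteq> {0..<dim_row A} \<and> card I = dim_col A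
     \<and> det (submatrix A I {0..<dim_col A}) \<noteq> 0"

definition basic_point :: "real mat \<Rightarrow> real vec \<Rightarrow> nat set \<Rightarrow> real vec" where
  "basic_point A b I = (THE x. x \<in> carrier_vec (dim_col A) \<and> (\<forall>i \<in> I. row A i \<bullet> x = b $ i))"

definition feasible_basis :: "real mat \<Rightarrow> real vec \<Rightarrow> nat set \<Rightarrow> bool" where
  "feasible_basis A b I \<longleftrightarrow> is_basis A I \<and> basic_point A b I \<in> polyhedron A b"

definition nondegenerate :: "real mat \<Rightarrow> real vec \<Rightarrow> bool" where
  "nondegenerate A b \<longleftrightarrow> inj_on (basic_point A b) {I. feasible_basis A b I}"

definition is_graph :: "'a set \<Rightarrow> 'a set set \<Rightarrow> bool" where
  "is_graph V E \<longleftrightarrow> (\<forall>e \<in> E. \<exists>I J. e = {I, J} \<and> I \<in> V \<and> J \<in> V \<and> I \<noteq> J)"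

definition neighbors :: "'a set set \<Rightarrow> 'a \<Rightarrow> 'a set" where
  "neighbors E I = {J. {I, J} \<in> E \<and> J \<noteq> I}"

definition bases_vertices :: "real mat \<Rightarrow> real vec \<Rightarrow> nat set set" where
  "bases_vertices A b = {I. feasible_basis A b I}"

definition bases_edges :: "real mat \<Rightarrow> real vec \<Rightarrow> nat set set set" where
  "bases_edges A b = {{I, J} | I J. feasible_basis A b I \<and> feasible_basis A b J \<and> I \<noteq> J
       \<and> card (I \<inter> J) = dim_col A - 1}"

end

theory Submission
  imports Defs
begin

text \<open>Fix a feasible basis K. The objective c = sum of the rows a_k, k in K, satisfies
  c x \<ge> sum of the b_k on P, and by nondegeneracy equality holds at a basic point only for the
  basis K. Let I in V minimize c over the basic points of V. Two feasible bases obtained from I by a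
  pivot leaving the same row coincide, again by nondegeneracy, so the n neighbours of I in G realize
  the pivots leaving each of the n rows of I, and none of them decreases c. This is the simplex
  optimality criterion: writing c as a combination of the rows of I, every multiplier is
  nonnegative, so x^I minimizes c over P and I = K. Hence every feasible basis lies in V, and
  uniqueness of pivots also shows that every edge of G_bases is an edge of G.\<close>

lemma bij_betw_pick:
  assumes "finite I"
  shows "bij_betw (pick I) {..<card I} I"
proof (rule bij_betw_imageI)
  show "inj_on (pick I) {..<card I}"
  proof (rule inj_onI)
    fix r r' assume "r \<in> {..<card I}" "r' \<in> {..<card I}" "pick I r = pick I r'"
    then show "r = r'" using card_pick_le[of r I] card_pick_le[of r' I] by (metis lessThan_iff)
  qed
  show "pick I ` {..<card I} = I"
  proof
    show "pick I ` {..<card I} \<subseteq> I" using pick_in_set_le by blast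
    show "I \<subseteq> pick I ` {..<card I}"
    proof
      fix j assume j: "j \<in> I"
      have "{a \<in> I. a < j} \<subset> I" using j by blast
      then have "card {a \<in> I. a < j} \<in> {..<card I}"
        using assms psubset_card_mono by (metis lessThan_iff)
      then show "j \<in> pick I ` {..<card I}"
        using pick_card_in_set[OF j] by (metis imageI)
    qed
  qed
qed

lemma pick_atLeastLessThan_0: "j < n \<Longrightarrow> pick {0..<n} j = j"
proof -
  assume "j < n"
  then have "{a \<in> {0..<n}. a < j} = {0..<j}" by auto
  then show ?thesis using pick_card_in_set[of j "{0..<n}"] \<open>j < n\<close> by simp
qed

lemma sum_pick: "finite I \<Longrightarrow> (\<Sum>r<card I. f (pick I r)) = (\<Sum>j\<in>I. f j)"
  by (rule sum.reindex_bij_betw[OF bij_betw_pick])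

lemma submatrix_carrier_mat:
  assumes "A \<in> carrier_mat m n" and "I \<subseteq> {0..<m}"
  shows "submatrix A I {0..<n} \<in> carrier_mat (card I) n"
proof -
  have "{i. i < dim_row A \<and> i \<in> I} = I" "{j. j < dim_col A \<and> j \<in> {0..<n}} = {0..<n}"
    using assms by auto
  then show ?thesis
    unfolding carrier_mat_def using dim_submatrix[of A I "{0..<n}"] assms(2) by simp
qed

lemma submatrix_mult_vec:
  assumes A: "A \<in> carrier_mat m n" and I: "I \<subseteq> {0..<m}"
  shows "submatrix A I {0..<n} *\<^sub>v v = vec (card I) (\<lambda>r. row A (pick I r) \<bullet> v)"
proof -
  have S: "submatrix A I {0..<n} \<in> carrier_mat (card I) n"
    by (rule submatrix_carrier_mat[OF A I])
  have "row (submatrix A I {0..<n}) r = row A (pick I r)" if r: "r < card I" for r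
  proof (rule eq_vecI)
    fix j assume "j < dim_vec (row A (pick I r))"
    then have j: "j < n" using A by simp
    have "pick I r < m" using pick_in_set_le[OF r] I by auto
    moreover have "{i. i < m \<and> i \<in> I} = I" "{j. j < n \<and> j \<in> {0..<n}} = {0..<n}"
      using I by auto
    ultimately show "row (submatrix A I {0..<n}) r $ j = row A (pick I r) $ j"
      using S A r j submatrix_index[of r A I j "{0..<n}"] pick_atLeastLessThan_0[OF j] by simp
  qed (use S A in simp)
  note row_submatrix = this
  show ?thesis
  proof (rule eq_vecI)
    fix r assume "r < dim_vec (vec (card I) (\<lambda>r. row A (pick I r) \<bullet> v))"
    then have r: "r < card I" by simp
    have "(submatrix A I {0..<n} *\<^sub>v v) $ r = row (submatrix A I {0..<n}) r \<bullet> v"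
      using S r by (intro index_mult_mat_vec) simp
    also have "\<dots> = vec (card I) (\<lambda>r. row A (pick I r) \<bullet> v) $ r"
      unfolding row_submatrix[OF r] index_vec[OF r] ..
    finally show "(submatrix A I {0..<n} *\<^sub>v v) $ r = vec (card I) (\<lambda>r. row A (pick I r) \<bullet> v) $ r" .
  qed (use S in simp)
qed

lemma nonsingular_mult_vec_surj:
  fixes S :: "'a :: field mat"
  assumes S: "S \<in> carrier_mat n n" and "det S \<noteq> 0" and y: "y \<in> carrier_vec n"
  obtains x where "x \<in> carrier_vec n" and "S *\<^sub>v x = y"
proof -
  have "S \<in> Units (ring_mat TYPE('a) n ())"
    by (rule det_non_zero_imp_unit[OF S \<open>det S \<noteq> 0\<close>])
  then have "\<exists>B \<in> carrier_mat n n. B * S = 1\<^sub>m n \<and> S * B = 1\<^sub>m n"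
    unfolding Units_def ring_mat_def by simp
  then obtain B where B: "B \<in> carrier_mat n n" and SB: "S * B = 1\<^sub>m n"
    by blast
  have "S *\<^sub>v (B *\<^sub>v y) = y"
    unfolding assoc_mult_mat_vec[OF S B y, symmetric] SB using y by simp
  then show ?thesis using that mult_mat_vec_carrier[OF B y] by blast
qed

lemma scalar_prod_add_smult:
  fixes a :: "'a :: comm_ring vec"
  assumes "a \<in> carrier_vec n" and "x \<in> carrier_vec n" and "z \<in> carrier_vec n"
  shows "a \<bullet> (p \<cdot>\<^sub>v x + q \<cdot>\<^sub>v z) = p * (a \<bullet> x) + q * (a \<bullet> z)"
  using assms by (simp add: scalar_prod_add_distrib[of _ n])

locale inequality_system =
  fixes A :: "real mat" and b :: "real vec" and m n :: nat
  assumes A_carrier: "A \<in> carrier_mat m n"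
begin

lemma row_carrier_vec_n [simp]: "row A k \<in> carrier_vec n"
  using row_carrier[of A k] A_carrier by simp

lemma basisD:
  assumes "is_basis A I"
  shows "I \<subseteq> {0..<m}" and "card I = n" and "finite I"
    and "det (submatrix A I {0..<n}) \<noteq> 0"
  using assms A_carrier finite_subset[of I "{0..<m}"] unfolding is_basis_def by auto

lemma basis_submatrix_carrier:
  assumes "is_basis A I"
  shows "submatrix A I {0..<n} \<in> carrier_mat n n"
  using submatrix_carrier_mat[OF A_carrier basisD(1)[OF assms]] basisD(2)[OF assms] by simp

lemma basis_rows_determine_vec:
  assumes I: "is_basis A I" and v: "v \<in> carrier_vec n" and w: "w \<in> carrier_vec n"
    and rows: "\<And>j. j \<in> I \<Longrightarrow> row A j \<bullet> v = row A j \<bullet> w"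
  shows "v = w"
proof -
  let ?S = "submatrix A I {0..<n}"
  have S: "?S \<in> carrier_mat n n" by (rule basis_submatrix_carrier[OF I])
  have "row A j \<bullet> (v - w) = 0" if "j \<in> I" for j
    using rows[OF that] scalar_prod_minus_distrib[OF row_carrier_vec_n v w] by simp
  then have "?S *\<^sub>v (v - w) = 0\<^sub>v n"
    unfolding submatrix_mult_vec[OF A_carrier basisD(1)[OF I]] basisD(2)[OF I]
    using pick_in_set_le basisD(2)[OF I] by (intro eq_vecI) auto
  then have "v - w = 0\<^sub>v n"
    using det_0_iff_vec_prod_zero_field[OF S] basisD(4)[OF I] minus_carrier_vec[OF v w] by blast
  then show "v = w"
  proof (intro eq_vecI)
    fix j assume "v - w = 0\<^sub>v n" "j < dim_vec w"
    then have "(v - w) $ j = 0" using w by simp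
    then show "v $ j = w $ j" using \<open>j < dim_vec w\<close> v w by simp
  qed (use v w in simp)
qed

lemma basis_system_solvable:
  assumes I: "is_basis A I"
  obtains x where "x \<in> carrier_vec n" and "\<And>j. j \<in> I \<Longrightarrow> row A j \<bullet> x = y $ j"
proof -
  let ?S = "submatrix A I {0..<n}"
  have S: "?S \<in> carrier_mat n n" by (rule basis_submatrix_carrier[OF I])
  obtain x where x: "x \<in> carrier_vec n" and Sx: "?S *\<^sub>v x = vec n (\<lambda>r. y $ pick I r)"
    using nonsingular_mult_vec_surj[OF S basisD(4)[OF I], of "vec n (\<lambda>r. y $ pick I r)"] by auto
  have "row A (pick I r) \<bullet> x = y $ pick I r" if "r < card I" for r
    using arg_cong[OF Sx, of "\<lambda>u. u $ r"] that basisD(2)[OF I]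
    unfolding submatrix_mult_vec[OF A_carrier basisD(1)[OF I]] by simp
  then have "row A j \<bullet> x = y $ j" if "j \<in> I" for j
    using bij_betw_pick[OF basisD(3)[OF I]] that unfolding bij_betw_def by (metis imageE lessThan_iff)
  with x that show ?thesis by blast
qed

lemma basis_rows_span:
  assumes I: "is_basis A I" and c: "c \<in> carrier_vec n"
  obtains \<mu> where "\<And>v. v \<in> carrier_vec n \<Longrightarrow> c \<bullet> v = (\<Sum>j\<in>I. \<mu> j * (row A j \<bullet> v))"
proof -
  let ?S = "submatrix A I {0..<n}"
  have S: "?S \<in> carrier_mat n n" by (rule basis_submatrix_carrier[OF I])
  have "det (transpose_mat ?S) \<noteq> 0"
    using det_transpose[OF S] basisD(4)[OF I] by simp
  then obtain \<nu> where \<nu>: "\<nu> \<in> carrier_vec n" and c_eq: "transpose_mat ?S *\<^sub>v \<nu> = c"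
    using nonsingular_mult_vec_surj[of "transpose_mat ?S" n c] S c by auto
  \<comment> \<open>card {a \<in> I. a < j} is the position of j in I, i.e. the inverse of pick I.\<close>
  define \<mu> where "\<mu> j = \<nu> $ card {a \<in> I. a < j}" for j
  have "c \<bullet> v = (\<Sum>j\<in>I. \<mu> j * (row A j \<bullet> v))" if v: "v \<in> carrier_vec n" for v
  proof -
    have "c \<bullet> v = \<nu> \<bullet> (?S *\<^sub>v v)"
      unfolding c_eq[symmetric] by (rule transpose_vec_mult_scalar[OF S v \<nu>])
    also have "\<dots> = (\<Sum>r<card I. \<mu> (pick I r) * (row A (pick I r) \<bullet> v))"
      using \<nu> basisD(2)[OF I] card_pick_le[of _ I]
      unfolding submatrix_mult_vec[OF A_carrier basisD(1)[OF I]] scalar_prod_def \<mu>_def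
      by (auto simp: atLeast0LessThan intro!: sum.cong)
    also have "\<dots> = (\<Sum>j\<in>I. \<mu> j * (row A j \<bullet> v))"
      by (rule sum_pick[OF basisD(3)[OF I]])
    finally show ?thesis .
  qed
  then show ?thesis using that by blast
qed

lemma basic_point_unique_solution:
  assumes I: "is_basis A I"
  shows "\<exists>!x. x \<in> carrier_vec n \<and> (\<forall>j\<in>I. row A j \<bullet> x = b $ j)"
proof -
  obtain x where "x \<in> carrier_vec n" and "\<And>j. j \<in> I \<Longrightarrow> row A j \<bullet> x = b $ j"
    using basis_system_solvable[OF I] by blast
  then show ?thesis
    using basis_rows_determine_vec[OF I] by (metis (no_types, lifting))
qed

lemma
  assumes "is_basis A I"
  shows basic_point_carrier: "basic_point A b I \<in> carrier_vec n"
    and basic_point_tight: "j \<in> I \<Longrightarrow> row A j \<bullet> basic_point A b I = b $ j"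
  using theI'[OF basic_point_unique_solution[OF assms]] A_carrier
  unfolding basic_point_def by auto

lemma basic_point_eqI:
  assumes I: "is_basis A I" and "y \<in> carrier_vec n" and "\<And>j. j \<in> I \<Longrightarrow> row A j \<bullet> y = b $ j"
  shows "basic_point A b I = y"
  using assms basic_point_carrier[OF I] basic_point_tight[OF I]
  by (intro basis_rows_determine_vec[OF I]) auto

lemma polyhedronD:
  assumes "z \<in> polyhedron A b"
  shows "z \<in> carrier_vec n" and "k < m \<Longrightarrow> b $ k \<le> row A k \<bullet> z"
  using assms A_carrier unfolding polyhedron_def by auto

lemma feasible_basisD:
  assumes "feasible_basis A b I"
  shows "is_basis A I" and "basic_point A b I \<in> polyhedron A b"
  using assms unfolding feasible_basis_def by auto

lemma tight_row_le_feasible_point: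
  assumes "feasible_basis A b I" and "feasible_basis A b J" and "j \<in> J"
  shows "row A j \<bullet> basic_point A b J \<le> row A j \<bullet> basic_point A b I"
  using basic_point_tight[OF feasible_basisD(1)[OF assms(2)] assms(3)]
    polyhedronD(2)[OF feasible_basisD(2)[OF assms(1)]] basisD(1)[OF feasible_basisD(1)[OF assms(2)]] assms(3)
  by auto

end

locale nondegenerate_system = inequality_system +
  assumes nondeg: "nondegenerate A b"
begin

lemma feasible_basis_eqI:
  assumes I: "feasible_basis A b I" and J: "feasible_basis A b J"
    and tight: "\<And>j. j \<in> I \<Longrightarrow> row A j \<bullet> basic_point A b J = b $ j"
  shows "J = I"
proof -
  have "basic_point A b I = basic_point A b J"
    using basic_point_eqI[OF feasible_basisD(1)[OF I] basic_point_carrier[OF feasible_basisD(1)[OF J]]] tight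
    by blast
  then show ?thesis
    using nondeg I J unfolding nondegenerate_def inj_on_def by blast
qed

lemma pivot_increases_slack:
  assumes I: "feasible_basis A b I" and J: "feasible_basis A b J" and "J \<noteq> I"
    and i: "i \<in> I" and sub: "I - {i} \<subseteq> J"
  shows "row A i \<bullet> basic_point A b I < row A i \<bullet> basic_point A b J"
proof -
  have "row A i \<bullet> basic_point A b J \<noteq> row A i \<bullet> basic_point A b I"
  proof
    assume eq: "row A i \<bullet> basic_point A b J = row A i \<bullet> basic_point A b I"
    have "row A j \<bullet> basic_point A b J = b $ j" if "j \<in> I" for j
      using that eq sub basic_point_tight[OF feasible_basisD(1)[OF I]]
        basic_point_tight[OF feasible_basisD(1)[OF J]] by (cases "j = i") auto
    then show False using feasible_basis_eqI[OF I J] \<open>J \<noteq> I\<close> by blast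
  qed
  then show ?thesis using tight_row_le_feasible_point[OF J I i] by linarith
qed

lemma feasible_basis_eq_if_between:
  assumes I: "feasible_basis A b I" and J: "feasible_basis A b J"
    and z: "z \<in> polyhedron A b" and t: "0 \<le> t" "t < 1"
    and y: "basic_point A b J = (1 - t) \<cdot>\<^sub>v basic_point A b I + t \<cdot>\<^sub>v z"
  shows "J = I"
proof -
  let ?x = "basic_point A b I"
  have "row A j \<bullet> ?x = b $ j" if j: "j \<in> J" for j
  proof -
    have "b $ j = (1 - t) * (row A j \<bullet> ?x) + t * (row A j \<bullet> z)"
      using basic_point_tight[OF feasible_basisD(1)[OF J] j] y
        scalar_prod_add_smult[OF row_carrier_vec_n basic_point_carrier[OF feasible_basisD(1)[OF I]]
          polyhedronD(1)[OF z]] by simp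
    moreover have "t * b $ j \<le> t * (row A j \<bullet> z)"
      using polyhedronD(2)[OF z] basisD(1)[OF feasible_basisD(1)[OF J]] j t(1)
      by (intro mult_left_mono) auto
    ultimately have "(1 - t) * (row A j \<bullet> ?x) \<le> (1 - t) * b $ j"
      by (simp add: algebra_simps)
    then have "row A j \<bullet> ?x \<le> b $ j" using t(2) by simp
    then show ?thesis
      using tight_row_le_feasible_point[OF I J j] basic_point_tight[OF feasible_basisD(1)[OF J] j] by simp
  qed
  then show ?thesis using feasible_basis_eqI[OF J I] by auto
qed

lemma pivot_unique_if_le:
  assumes I: "feasible_basis A b I" and J1: "feasible_basis A b J1" and J2: "feasible_basis A b J2"
    and "J1 \<noteq> I" and "J2 \<noteq> I" and i: "i \<in> I" and "I - {i} \<subseteq> J1" and "I - {i} \<subseteq> J2"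
    and le: "row A i \<bullet> basic_point A b J1 \<le> row A i \<bullet> basic_point A b J2"
  shows "J1 = J2"
proof -
  let ?x = "basic_point A b I" and ?y1 = "basic_point A b J1" and ?y2 = "basic_point A b J2"
  have x: "?x \<in> carrier_vec n" and y1: "?y1 \<in> carrier_vec n" and y2: "?y2 \<in> carrier_vec n"
    using basic_point_carrier feasible_basisD(1) I J1 J2 by blast+
  define \<alpha> where "\<alpha> = row A i \<bullet> ?y1 - row A i \<bullet> ?x"
  define \<beta> where "\<beta> = row A i \<bullet> ?y2 - row A i \<bullet> ?x"
  define s where "s = \<alpha> / \<beta>"
  have "0 < \<alpha>" "\<alpha> \<le> \<beta>"
    using pivot_increases_slack[OF I J1 assms(4) i assms(7)] le unfolding \<alpha>_def \<beta>_def by simp_all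
  then have s: "0 < s" "s \<le> 1" and "s * \<beta> = \<alpha>"
    unfolding s_def by simp_all
  then have si: "row A i \<bullet> ?y1 = (1 - s) * (row A i \<bullet> ?x) + s * (row A i \<bullet> ?y2)"
    unfolding \<alpha>_def \<beta>_def by (simp add: algebra_simps)
  \<comment> \<open>y1 - x and y2 - x lie on the line cut out by the rows I - {i}, so y1 lies between x and y2.\<close>
  have y1_eq: "?y1 = (1 - s) \<cdot>\<^sub>v ?x + s \<cdot>\<^sub>v ?y2"
  proof (rule basis_rows_determine_vec[OF feasible_basisD(1)[OF I] y1])
    show "(1 - s) \<cdot>\<^sub>v ?x + s \<cdot>\<^sub>v ?y2 \<in> carrier_vec n" using x y2 by simp
    fix j assume j: "j \<in> I"
    show "row A j \<bullet> ?y1 = row A j \<bullet> ((1 - s) \<cdot>\<^sub>v ?x + s \<cdot>\<^sub>v ?y2)"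
    proof (cases "j = i")
      case False
      then have "j \<in> J1" "j \<in> J2" using j assms(7,8) by auto
      then show ?thesis
        using j scalar_prod_add_smult[OF row_carrier_vec_n x y2] basic_point_tight feasible_basisD(1) I J1 J2
        by (simp add: algebra_simps)
    qed (use si scalar_prod_add_smult[OF row_carrier_vec_n x y2] in simp)
  qed
  then have rows_y1: "row A k \<bullet> ?y1 = (1 - s) * (row A k \<bullet> ?x) + s * (row A k \<bullet> ?y2)" for k
    using scalar_prod_add_smult[OF row_carrier_vec_n x y2] by simp
  show ?thesis
  proof (cases "s = 1")
    case True
    have "row A j \<bullet> ?y1 = b $ j" if "j \<in> J2" for j
      using that rows_y1[of j] True basic_point_tight[OF feasible_basisD(1)[OF J2]] by simp
    then show ?thesis using feasible_basis_eqI[OF J2 J1] by blast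
  next
    case False
    then have "J1 = I"
      using feasible_basis_eq_if_between[OF I J1 feasible_basisD(2)[OF J2] _ _ y1_eq] s by simp
    with \<open>J1 \<noteq> I\<close> show ?thesis by blast
  qed
qed

lemma pivot_unique:
  assumes "feasible_basis A b I" and "feasible_basis A b J1" and "feasible_basis A b J2"
    and "J1 \<noteq> I" and "J2 \<noteq> I" and "i \<in> I" and "I - {i} \<subseteq> J1" and "I - {i} \<subseteq> J2"
  shows "J1 = J2"
  using pivot_unique_if_le[OF assms] pivot_unique_if_le[OF assms(1,3,2,5,4,6,8,7)] by argo

lemma locally_optimal_basis_optimal:
  assumes I: "feasible_basis A b I" and c: "c \<in> carrier_vec n"
    and local_opt: "\<And>i. i \<in> I \<Longrightarrow>
      \<exists>J. feasible_basis A b J \<and> J \<noteq> I \<and> I - {i} \<subseteq> J \<and> c \<bullet> basic_point A b I \<le> c \<bullet> basic_point A b J"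
    and z: "z \<in> polyhedron A b"
  shows "c \<bullet> basic_point A b I \<le> c \<bullet> z"
proof -
  let ?x = "basic_point A b I"
  have B: "is_basis A I" by (rule feasible_basisD(1)[OF I])
  obtain \<mu> where \<mu>: "\<And>v. v \<in> carrier_vec n \<Longrightarrow> c \<bullet> v = (\<Sum>j\<in>I. \<mu> j * (row A j \<bullet> v))"
    using basis_rows_span[OF B c] by blast
  have gain: "c \<bullet> v - c \<bullet> ?x = (\<Sum>j\<in>I. \<mu> j * (row A j \<bullet> v - b $ j))" if "v \<in> carrier_vec n" for v
    using \<mu>[OF that] \<mu>[OF basic_point_carrier[OF B]] basic_point_tight[OF B]
    by (simp add: sum_subtractf right_diff_distrib)
  \<comment> \<open>The pivot leaving row i changes c only through the multiplier of row i.\<close>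
  have "0 \<le> \<mu> i" if i: "i \<in> I" for i
  proof -
    obtain J where J: "feasible_basis A b J" "J \<noteq> I" "I - {i} \<subseteq> J"
      and no_gain: "c \<bullet> ?x \<le> c \<bullet> basic_point A b J"
      using local_opt[OF i] by blast
    let ?y = "basic_point A b J"
    have "row A j \<bullet> ?y - b $ j = 0" if "j \<in> I - {i}" for j
      using that J(3) basic_point_tight[OF feasible_basisD(1)[OF J(1)]] by auto
    then have "(\<Sum>j\<in>I - {i}. \<mu> j * (row A j \<bullet> ?y - b $ j)) = 0"
      by simp
    then have "c \<bullet> ?y - c \<bullet> ?x = \<mu> i * (row A i \<bullet> ?y - b $ i)"
      unfolding gain[OF basic_point_carrier[OF feasible_basisD(1)[OF J(1)]]]
        sum.remove[OF basisD(3)[OF B] i] by simp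
    with no_gain have "0 \<le> \<mu> i * (row A i \<bullet> ?y - b $ i)" by simp
    moreover have "0 < row A i \<bullet> ?y - b $ i"
      using pivot_increases_slack[OF I J(1,2) i J(3)] basic_point_tight[OF B i] by simp
    ultimately show ?thesis by (simp add: zero_le_mult_iff)
  qed
  moreover have "b $ j \<le> row A j \<bullet> z" if "j \<in> I" for j
    using that polyhedronD(2)[OF z] basisD(1)[OF B] by auto
  ultimately have "0 \<le> c \<bullet> z - c \<bullet> ?x"
    unfolding gain[OF polyhedronD(1)[OF z]] by (intro sum_nonneg) simp
  then show ?thesis by simp
qed

lemma feasible_basis_unique_minimizer:
  assumes K: "feasible_basis A b K"
  obtains c where "c \<in> carrier_vec n"
    and "\<And>J. feasible_basis A b J \<Longrightarrow> c \<bullet> basic_point A b J \<le> c \<bullet> basic_point A b K \<Longrightarrow> J = K"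
proof -
  have BK: "is_basis A K" by (rule feasible_basisD(1)[OF K])
  define c where "c = vec n (\<lambda>j. \<Sum>k\<in>K. A $$ (k, j))"
  have c_sum: "c \<bullet> v = (\<Sum>k\<in>K. row A k \<bullet> v)" if v: "v \<in> carrier_vec n" for v
  proof -
    have "c \<bullet> v = (\<Sum>j<n. \<Sum>k\<in>K. A $$ (k, j) * v $ j)"
      unfolding c_def scalar_prod_def using v by (simp add: sum_distrib_right atLeast0LessThan)
    also have "\<dots> = (\<Sum>k\<in>K. \<Sum>j<n. A $$ (k, j) * v $ j)" by (rule sum.swap)
    also have "\<dots> = (\<Sum>k\<in>K. row A k \<bullet> v)"
    proof (rule sum.cong[OF refl])
      fix k assume "k \<in> K"
      then have "k < m" using basisD(1)[OF BK] by auto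
      then show "(\<Sum>j<n. A $$ (k, j) * v $ j) = row A k \<bullet> v"
        unfolding scalar_prod_def using v A_carrier by (simp add: atLeast0LessThan)
    qed
    finally show ?thesis .
  qed
  \<comment> \<open>On P each summand of c is at least b $ k, with equality iff row k is tight.\<close>
  have "J = K" if J: "feasible_basis A b J"
    and le: "c \<bullet> basic_point A b J \<le> c \<bullet> basic_point A b K" for J
  proof (rule feasible_basis_eqI[OF K J])
    let ?y = "basic_point A b J"
    have slack: "b $ k \<le> row A k \<bullet> ?y" if "k \<in> K" for k
      using tight_row_le_feasible_point[OF J K that] basic_point_tight[OF BK that] by simp
    have "(\<Sum>k\<in>K. row A k \<bullet> ?y) \<le> (\<Sum>k\<in>K. b $ k)"
      using le basic_point_tight[OF BK]
      unfolding c_sum[OF basic_point_carrier[OF feasible_basisD(1)[OF J]]] c_sum[OF basic_point_carrier[OF BK]]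
      by simp
    then have "\<not> (\<exists>k\<in>K. b $ k < row A k \<bullet> ?y)"
      using sum_strict_mono_ex1[OF basisD(3)[OF BK], of "\<lambda>k. b $ k" "\<lambda>k. row A k \<bullet> ?y"] slack
      by fastforce
    with slack show "row A k \<bullet> ?y = b $ k" if "k \<in> K" for k
      using that by force
  qed
  moreover have "c \<in> carrier_vec n" unfolding c_def by simp
  ultimately show ?thesis using that by blast
qed

end

lemma Diff_eq_singleton_if_card_Int:
  assumes "finite I" and "I \<noteq> {}" and "card (I \<inter> J) = card I - 1"
  obtains i where "I - J = {i}"
proof -
  have "card (I - J) = card I - card (I \<inter> J)"
    using assms(1) by (intro card_Diff_subset_Int) simp
  also have "\<dots> = 1"
    using assms card_gt_0_iff[of I] by simp
  finally show ?thesis using that card_1_singletonE by blast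
qed

locale feasible_basis_graph = nondegenerate_system +
  fixes V :: "nat set set" and E :: "nat set set set"
  assumes finite_V: "finite V" and graph: "is_graph V E" and V_nonempty: "V \<noteq> {}"
    and V_feasible: "\<And>I. I \<in> V \<Longrightarrow> feasible_basis A b I"
    and neighbors_adjacent: "\<And>I J. I \<in> V \<Longrightarrow> J \<in> neighbors E I \<Longrightarrow> card (I \<inter> J) = n - 1"
    and degree: "\<And>I. I \<in> V \<Longrightarrow> card (neighbors E I) = n"
begin

lemma neighborsD:
  assumes "J \<in> neighbors E I"
  shows "J \<in> V" and "J \<noteq> I" and "{I, J} \<in> E"
proof -
  show e: "{I, J} \<in> E" and "J \<noteq> I"
    using assms by (simp_all add: neighbors_def)
  obtain I' J' where "{I, J} = {I', J'}" and "I' \<in> V" and "J' \<in> V"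
    using bspec[OF graph[unfolded is_graph_def] e] by blast
  then show "J \<in> V" by (auto simp: doubleton_eq_iff)
qed

lemma neighbor_pivots_out:
  assumes I: "I \<in> V" and i: "i \<in> I"
  shows "\<exists>J \<in> neighbors E I. I - {i} \<subseteq> J"
proof -
  let ?N = "neighbors E I"
  have FI: "feasible_basis A b I" by (rule V_feasible[OF I])
  have fin: "finite I" and card_I: "card I = n"
    using basisD feasible_basisD(1)[OF FI] by auto
  have "\<exists>k. I - J = {k}" if "J \<in> ?N" for J
    using Diff_eq_singleton_if_card_Int[OF fin _ neighbors_adjacent[OF I that, folded card_I]] i by blast
  then obtain g where g: "\<And>J. J \<in> ?N \<Longrightarrow> I - J = {g J}" by metis
  \<comment> \<open>Distinct neighbours leave distinct rows of I, and there are as many neighbours as rows.\<close>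
  have "inj_on g ?N"
  proof (rule inj_onI)
    fix J1 J2 assume J1: "J1 \<in> ?N" and J2: "J2 \<in> ?N" and "g J1 = g J2"
    then show "J1 = J2"
      using pivot_unique[OF FI V_feasible[OF neighborsD(1)[OF J1]] V_feasible[OF neighborsD(1)[OF J2]]
          neighborsD(2)[OF J1] neighborsD(2)[OF J2], of "g J1"] g[OF J1] g[OF J2]
      by auto
  qed
  then have card_eq: "card (g ` ?N) = card I"
    using degree[OF I] card_I by (simp add: card_image)
  have "g ` ?N \<subseteq> I"
  proof (rule image_subsetI)
    fix J assume "J \<in> ?N"
    show "g J \<in> I" using g[OF \<open>J \<in> ?N\<close>] by blast
  qed
  then have "g ` ?N = I" using card_subset_eq[OF fin _ card_eq] by blast
  then have "i \<in> g ` ?N" using i by simp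
  then obtain J where J: "J \<in> ?N" "g J = i" by blast
  have "I - {i} \<subseteq> J" using g[OF J(1)] unfolding J(2) by blast
  with J(1) show ?thesis by blast
qed

lemma feasible_basis_in_V:
  assumes K: "feasible_basis A b K"
  shows "K \<in> V"
proof -
  obtain c where c: "c \<in> carrier_vec n"
    and unique: "\<And>J. feasible_basis A b J \<Longrightarrow> c \<bullet> basic_point A b J \<le> c \<bullet> basic_point A b K \<Longrightarrow> J = K"
    using feasible_basis_unique_minimizer[OF K] by blast
  define I where "I = arg_min_on (\<lambda>J. c \<bullet> basic_point A b J) V"
  have I: "I \<in> V" and I_min: "\<And>J. J \<in> V \<Longrightarrow> c \<bullet> basic_point A b I \<le> c \<bullet> basic_point A b J"
    using arg_min_if_finite[OF finite_V V_nonempty, of "\<lambda>J. c \<bullet> basic_point A b J"]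
    unfolding I_def by (auto simp: not_less)
  have "c \<bullet> basic_point A b I \<le> c \<bullet> basic_point A b K"
  proof (rule locally_optimal_basis_optimal[OF V_feasible[OF I] c _ feasible_basisD(2)[OF K]])
    fix i assume "i \<in> I"
    then obtain J where "J \<in> neighbors E I" "I - {i} \<subseteq> J"
      using neighbor_pivots_out[OF I] by blast
    then show "\<exists>J. feasible_basis A b J \<and> J \<noteq> I \<and> I - {i} \<subseteq> J
        \<and> c \<bullet> basic_point A b I \<le> c \<bullet> basic_point A b J"
      using neighborsD V_feasible I_min by blast
  qed
  then show ?thesis using unique[OF V_feasible[OF I]] I by simp
qed

lemma vertices_eq: "V = bases_vertices A b"
  unfolding bases_vertices_def using V_feasible feasible_basis_in_V by blast

lemma edges_subset: "E \<subseteq> bases_edges A b"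
proof
  fix e assume e: "e \<in> E"
  obtain I J where IJ: "e = {I, J}" "I \<in> V" "J \<in> V" "I \<noteq> J"
    using bspec[OF graph[unfolded is_graph_def] e] by blast
  then have "J \<in> neighbors E I" using e by (simp add: neighbors_def)
  then have "feasible_basis A b I \<and> feasible_basis A b J \<and> I \<noteq> J \<and> card (I \<inter> J) = dim_col A - 1"
    using neighbors_adjacent[OF IJ(2)] V_feasible IJ(2-4) A_carrier by simp
  then show "e \<in> bases_edges A b"
    unfolding bases_edges_def IJ(1) by blast
qed

lemma bases_edges_subset: "bases_edges A b \<subseteq> E"
proof
  fix e assume "e \<in> bases_edges A b"
  then obtain I J where IJ: "e = {I, J}" "feasible_basis A b I" "feasible_basis A b J" "I \<noteq> J"
    and adj: "card (I \<inter> J) = n - 1"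
    unfolding bases_edges_def using A_carrier by auto
  have fin: "finite I" "finite J" and card_I: "card I = n" and card_J: "card J = n"
    using basisD feasible_basisD(1) IJ(2,3) by auto
  have "I \<noteq> {}"
  proof
    assume "I = {}"
    then have "J = {}" using card_I card_J fin(2) by simp
    with \<open>I = {}\<close> IJ(4) show False by simp
  qed
  then obtain i where i: "I - J = {i}"
    using Diff_eq_singleton_if_card_Int[OF fin(1)] adj card_I by metis
  then have "i \<in> I" and "I - {i} \<subseteq> J" by blast+
  obtain J' where J': "J' \<in> neighbors E I" "I - {i} \<subseteq> J'"
    using neighbor_pivots_out[OF feasible_basis_in_V[OF IJ(2)] \<open>i \<in> I\<close>] by blast
  have "J = J'"
    using pivot_unique[OF IJ(2,3) V_feasible[OF neighborsD(1)[OF J'(1)]] _ neighborsD(2)[OF J'(1)]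
        \<open>i \<in> I\<close> \<open>I - {i} \<subseteq> J\<close> J'(2)] IJ(4) by blast
  then show "e \<in> E" using neighborsD(3)[OF J'(1)] IJ(1) by simp
qed

lemma edges_eq: "E = bases_edges A b"
  using edges_subset bases_edges_subset by blast

end

theorem theorem3p5:
  fixes A :: "real mat" and b :: "real vec" and m n :: nat
    and V :: "nat set set" and E :: "nat set set set"
  assumes "A \<in> carrier_mat m n" and "b \<in> carrier_vec m"
    and "is_polytope A b"
    and "nondegenerate A b"
    and "finite V" and "is_graph V E"
    and "\<forall>I \<in> V. I \<subseteq> {0..<m}"
    and "V \<noteq> {}"
    and "\<forall>I \<in> V. feasible_basis A b I"
    and "\<forall>I \<in> V. \<forall>J \<in> neighbors E I. card (I \<inter> J) = n - 1"
    and "\<forall>I \<in> V. card (neighbors E I) = n"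
  shows "V = bases_vertices A b \<and> E = bases_edges A b"
proof -
  interpret feasible_basis_graph A b m n V E
    using assms by unfold_locales auto
  show ?thesis using vertices_eq edges_eq by blast
qed

end
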